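(* Let $(G,R,\omega)$ be a metric RPP instance and $S$ an edge-minimizing Eulerian extension for it. Then every vertex $v\in V$ is incident to at most two edges of $S$ (counted with multiplicity).
   Context: An RPP instance is a triple $(G,R,\omega)$, where $G=(V,E)$ is an undirected multigraph, $\omega\colon E\to\mathbb{N}$ assigns weights (parallel edges have equal weight), and $R$ is a nonempty multiset of edges of $G$. The instance is metric if $G$ contains an edge between any two vertices and the weights satisfy the triangle inequality $\omega(\{u,w\})\le\omega(\{u,v\})+\omega(\{v,w\})$ for all $u,v,w\in V$. For a multiset $X$ of edges: - $\omega(X)$ and $|X|$ are the weight and cardinality counted with multiplicity; - $V(X)$ is the set of vertices incident to edges of $X$; - $G\langle X\rangle=(V(X),X)$ is the multigraph formed by $X$ (no isolated vertices); - $\uplus$ denotes multiset sum. A vertex is balanced in a multigraph if its degree is even (a loop counts 2), and imbalanced otherwise. A multigraph without isolated vertices is Eulerian if it is connected and all vertices are balanced. An Eulerian extension for $(G,R,\omega)$ is a multiset $S$ of edges of $G$ such that $G\langle R\uplus S\rangle$ is Eulerian. It is edge-minimizing if there is no Eulerian extension $S'$ with $|S'|<|S|$ and $\omega(S')\le\omega(S)$. *)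

theory Defs
  imports Main "HOL-Library.Multiset"
begin

text \<open>An undirected multigraph G = (V,E): edges are elements of an abstract type,
  each edge e has a nonempty set of one or two endpoints ends e (one endpoint = loop).\<close>

definition multigraph :: "'v set \<Rightarrow> 'e set \<Rightarrow> ('e \<Rightarrow> 'v set) \<Rightarrow> bool" where
  "multigraph V E ends \<longleftrightarrow> finite V \<and> finite E \<and>
     (\<forall>e\<in>E. ends e \<subseteq> V \<and> ends e \<noteq> {} \<and> card (ends e) \<le> 2)"

definition mweight :: "('e \<Rightarrow> nat) \<Rightarrow> 'e multiset \<Rightarrow> nat" where
  "mweight w X = sum_mset (image_mset w X)"

definition mverts :: "('e \<Rightarrow> 'v set) \<Rightarrow> 'e multiset \<Rightarrow> 'v set" where
  "mverts ends X = (\<Union>e\<in>set_mset X. ends e)"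

definition mdeg :: "('e \<Rightarrow> 'v set) \<Rightarrow> 'e multiset \<Rightarrow> 'v \<Rightarrow> nat" where
  "mdeg ends X v = sum_mset (image_mset (\<lambda>e. if ends e = {v} then 2 else if v \<in> ends e then 1 else 0) X)"

definition madj :: "('e \<Rightarrow> 'v set) \<Rightarrow> 'e multiset \<Rightarrow> ('v \<times> 'v) set" where
  "madj ends X = {(u, w). \<exists>e\<in>set_mset X. u \<in> ends e \<and> w \<in> ends e}"

definition mconnected :: "('e \<Rightarrow> 'v set) \<Rightarrow> 'e multiset \<Rightarrow> bool" where
  "mconnected ends X \<longleftrightarrow> mverts ends X \<noteq> {} \<and>
     (\<forall>u\<in>mverts ends X. \<forall>w\<in>mverts ends X. (u, w) \<in> (madj ends X)\<^sup>*)"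

definition eulerian :: "('e \<Rightarrow> 'v set) \<Rightarrow> 'e multiset \<Rightarrow> bool" where
  "eulerian ends X \<longleftrightarrow> mconnected ends X \<and> (\<forall>v\<in>mverts ends X. even (mdeg ends X v))"

definition rpp_instance :: "'v set \<Rightarrow> 'e set \<Rightarrow> ('e \<Rightarrow> 'v set) \<Rightarrow> 'e multiset \<Rightarrow> ('e \<Rightarrow> nat) \<Rightarrow> bool" where
  "rpp_instance V E ends R w \<longleftrightarrow> multigraph V E ends \<and> R \<noteq> {#} \<and> set_mset R \<subseteq> E \<and>
     (\<forall>e\<in>E. \<forall>e'\<in>E. ends e = ends e' \<longrightarrow> w e = w e')"

text \<open>Metric: an edge between any two distinct vertices, and the triangle inequality
  omega({u,w}) \<le> omega({u,v}) + omega({v,w}) for all u,v,w (whenever those edges exist;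
  since parallel edges have equal weight, omega on vertex pairs is well defined).\<close>
definition metric_instance :: "'v set \<Rightarrow> 'e set \<Rightarrow> ('e \<Rightarrow> 'v set) \<Rightarrow> 'e multiset \<Rightarrow> ('e \<Rightarrow> nat) \<Rightarrow> bool" where
  "metric_instance V E ends R w \<longleftrightarrow> rpp_instance V E ends R w \<and>
     (\<forall>u\<in>V. \<forall>v\<in>V. u \<noteq> v \<longrightarrow> (\<exists>e\<in>E. ends e = {u, v})) \<and>
     (\<forall>u\<in>V. \<forall>v\<in>V. \<forall>x\<in>V. \<forall>e1\<in>E. \<forall>e2\<in>E. \<forall>e3\<in>E.
        ends e1 = {u, x} \<longrightarrow> ends e2 = {u, v} \<longrightarrow> ends e3 = {v, x} \<longrightarrow> w e1 \<le> w e2 + w e3)"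

definition eulerian_extension :: "'e set \<Rightarrow> ('e \<Rightarrow> 'v set) \<Rightarrow> 'e multiset \<Rightarrow> 'e multiset \<Rightarrow> bool" where
  "eulerian_extension E ends R S \<longleftrightarrow> set_mset S \<subseteq> E \<and> eulerian ends (R + S)"

definition edge_minimizing :: "'e set \<Rightarrow> ('e \<Rightarrow> 'v set) \<Rightarrow> 'e multiset \<Rightarrow> ('e \<Rightarrow> nat) \<Rightarrow> 'e multiset \<Rightarrow> bool" where
  "edge_minimizing E ends R w S \<longleftrightarrow> eulerian_extension E ends R S \<and>
     \<not> (\<exists>S'. eulerian_extension E ends R S' \<and> size S' < size S \<and> mweight w S' \<le> mweight w S)"

end

theory Submission
  imports Defs
begin

text \<open>If \<open>v\<close> met three edges \<open>{v, x\<^sub>i}\<close> of \<open>S\<close>, delete them from \<open>R + S\<close>. If some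
  \<open>x\<^sub>i\<close> is still connected to \<open>v\<close> (as it is when \<open>x\<^sub>i = v\<close>, a loop), replacing \<open>{v, x\<^sub>i}\<close> and
  another \<open>{v, x\<^sub>j}\<close> by the edge \<open>{x\<^sub>i, x\<^sub>j}\<close> (or by nothing if \<open>x\<^sub>i = x\<^sub>j\<close>) keeps the
  multigraph Eulerian and, by the triangle inequality, gives a smaller extension of no larger
  weight. Otherwise the component of each \<open>x\<^sub>i\<close> in the remaining graph avoids \<open>v\<close>; its degree
  sum is even both there and in \<open>R + S\<close>, so it contains an even number of the \<open>x\<^sub>i\<close>. But
  three points cannot be split into classes of even size.\<close>

lemma mdeg_add_mset: "mdeg ends (add_mset e X) u = mdeg ends {#e#} u + mdeg ends X u"
  unfolding mdeg_def by simp

lemma mdeg_empty: "mdeg ends {#} u = 0"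
  unfolding mdeg_def by simp

lemma mdeg_union: "mdeg ends (A + B) u = mdeg ends A u + mdeg ends B u"
  unfolding mdeg_def by simp

lemma mdeg_single_pair:
  "ends e = {a, b} \<Longrightarrow> mdeg ends {#e#} u = of_bool (u = a) + of_bool (u = b)"
  unfolding mdeg_def by auto

lemma sum_mdeg_single_pair:
  "ends e = {a, b} \<Longrightarrow> finite C \<Longrightarrow>
    (\<Sum>u\<in>C. mdeg ends {#e#} u) = of_bool (a \<in> C) + of_bool (b \<in> C)"
  by (simp add: mdeg_single_pair sum.distrib)

lemma mdeg_eq_0_if_notin_mverts: "u \<notin> mverts ends X \<Longrightarrow> mdeg ends X u = 0"
  unfolding mdeg_def mverts_def by (induction X) auto

lemma mverts_union: "mverts ends (A + B) = mverts ends A \<union> mverts ends B"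
  unfolding mverts_def by auto

lemma madj_union: "madj ends (A + B) = madj ends A \<union> madj ends B"
  unfolding madj_def by auto

lemma rtrancl_madj_mono: "X \<subseteq># Y \<Longrightarrow> (madj ends X)\<^sup>* \<subseteq> (madj ends Y)\<^sup>*"
  unfolding madj_def by (rule rtrancl_mono) (auto dest: mset_subset_eqD)

lemma rtrancl_madj_sym: "(p, q) \<in> (madj ends X)\<^sup>* \<Longrightarrow> (q, p) \<in> (madj ends X)\<^sup>*"
proof -
  have "sym (madj ends X)" unfolding madj_def sym_def by auto
  then have "sym ((madj ends X)\<^sup>*)" by (rule sym_rtrancl)
  then show "(p, q) \<in> (madj ends X)\<^sup>* \<Longrightarrow> (q, p) \<in> (madj ends X)\<^sup>*" by (auto dest: symD)
qed

lemma rtrancl_madj_mverts: "(p, q) \<in> (madj ends X)\<^sup>* \<Longrightarrow> p = q \<or> q \<in> mverts ends X"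
  by (induction rule: rtrancl_induct) (auto simp: madj_def mverts_def)

lemma eulerian_even_mdeg: "eulerian ends X \<Longrightarrow> even (mdeg ends X u)"
  unfolding eulerian_def by (cases "u \<in> mverts ends X") (auto simp: mdeg_eq_0_if_notin_mverts)

lemma multigraph_ends_pair:
  assumes "multigraph V E ends" "e \<in> E"
  shows "\<exists>a b. ends e = {a, b}"
proof -
  have "finite (ends e)" "ends e \<noteq> {}" "card (ends e) \<le> 2"
    using assms finite_subset unfolding multigraph_def by auto
  then have "card (ends e) = 1 \<or> card (ends e) = 2" using card_gt_0_iff[of "ends e"] by linarith
  then show ?thesis by (auto simp: card_1_singleton_iff card_2_iff)
qed

lemma multigraph_incident_ends:
  assumes "multigraph V E ends" "e \<in> E" "v \<in> ends e"
  obtains x where "ends e = {v, x}"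
proof -
  obtain a b where "ends e = {a, b}" using multigraph_ends_pair[OF assms(1,2)] by blast
  with assms(3) have "ends e = {v, if v = a then b else a}" by auto
  then show ?thesis by (rule that)
qed

lemma mverts_subset_if_multigraph:
  "multigraph V E ends \<Longrightarrow> set_mset X \<subseteq> E \<Longrightarrow> mverts ends X \<subseteq> V"
  unfolding multigraph_def mverts_def by blast

lemma even_sum_mdeg_if_closed:
  assumes "finite C"
    and "\<And>e. e \<in># X \<Longrightarrow> \<exists>a b. ends e = {a, b}"
    and "\<And>e. e \<in># X \<Longrightarrow> ends e \<subseteq> C \<or> ends e \<inter> C = {}"
  shows "even (\<Sum>u\<in>C. mdeg ends X u)"
  using assms(2,3)
proof (induction X)
  case empty
  then show ?case by (simp add: mdeg_empty)
next
  case (add e X)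
  obtain a b where ab: "ends e = {a, b}" using add.prems(1)[of e] by auto
  have "a \<in> C \<longleftrightarrow> b \<in> C" using add.prems(2)[of e] ab by auto
  then have "even (\<Sum>u\<in>C. mdeg ends {#e#} u)"
    by (simp add: sum_mdeg_single_pair[of ends e a b, OF ab assms(1)])
  moreover have "even (\<Sum>u\<in>C. mdeg ends X u)" using add by simp
  ultimately show ?case by (simp add: mdeg_add_mset[of ends e X] sum.distrib)
qed

lemma finite_madj_component:
  assumes "multigraph V E ends" "set_mset T \<subseteq> E"
  shows "finite {u. (y, u) \<in> (madj ends T)\<^sup>*}"
proof (rule finite_subset)
  show "{u. (y, u) \<in> (madj ends T)\<^sup>*} \<subseteq> insert y V"
    using rtrancl_madj_mverts mverts_subset_if_multigraph[OF assms] by fastforce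
  show "finite (insert y V)" using assms(1) unfolding multigraph_def by simp
qed

lemma even_sum_mdeg_component:
  assumes mg: "multigraph V E ends" and AT: "set_mset (A + T) \<subseteq> E"
    and even: "\<And>u. even (mdeg ends (A + T) u)"
  shows "even (\<Sum>u \<in> {u. (y, u) \<in> (madj ends T)\<^sup>*}. mdeg ends A u)"
proof -
  define C where "C = {u. (y, u) \<in> (madj ends T)\<^sup>*}"
  have TE: "set_mset T \<subseteq> E" using AT by simp
  have closed: "ends e \<subseteq> C \<or> ends e \<inter> C = {}" if e: "e \<in># T" for e
  proof (cases "ends e \<inter> C = {}")
    case False
    then obtain p where p: "p \<in> ends e" "p \<in> C" by blast
    have "(p, q) \<in> madj ends T" if "q \<in> ends e" for q
      using e p(1) that unfolding madj_def by blast
    then show ?thesis using p(2) unfolding C_def by (auto intro: rtrancl_into_rtrancl)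
  qed simp
  have "even (\<Sum>u\<in>C. mdeg ends T u)"
    using finite_madj_component[OF mg TE] multigraph_ends_pair[OF mg] TE closed
    unfolding C_def by (intro even_sum_mdeg_if_closed) auto
  moreover have "even (\<Sum>u\<in>C. mdeg ends (A + T) u)" using even by (simp add: dvd_sum)
  ultimately show ?thesis unfolding C_def[symmetric] by (simp add: mdeg_union sum.distrib)
qed

lemma even_ends_in_component:
  assumes mg: "multigraph V E ends"
    and E: "set_mset (add_mset e1 (add_mset e2 (add_mset e3 T))) \<subseteq> E"
    and even: "\<And>u. even (mdeg ends (add_mset e1 (add_mset e2 (add_mset e3 T))) u)"
    and h1: "ends e1 = {v, x1}" and h2: "ends e2 = {v, x2}" and h3: "ends e3 = {v, x3}"
    and cut: "(y, v) \<notin> (madj ends T)\<^sup>*"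
  shows "even (of_bool ((y, x1) \<in> (madj ends T)\<^sup>*) + of_bool ((y, x2) \<in> (madj ends T)\<^sup>*)
    + of_bool ((y, x3) \<in> (madj ends T)\<^sup>*) :: nat)"
proof -
  define C where "C = {u. (y, u) \<in> (madj ends T)\<^sup>*}"
  have fin: "finite C" using finite_madj_component[OF mg] E unfolding C_def by simp
  have "v \<notin> C" using cut unfolding C_def by simp
  then have "(\<Sum>u\<in>C. mdeg ends {#e1, e2, e3#} u) = of_bool (x1 \<in> C) + of_bool (x2 \<in> C) + of_bool (x3 \<in> C)"
    by (simp add: mdeg_add_mset[of ends e1 "{#e2, e3#}"] mdeg_add_mset[of ends e2 "{#e3#}"]
        sum.distrib sum_mdeg_single_pair[of ends e1 v x1, OF h1 fin]
        sum_mdeg_single_pair[of ends e2 v x2, OF h2 fin] sum_mdeg_single_pair[of ends e3 v x3, OF h3 fin])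
  moreover have "even (\<Sum>u\<in>C. mdeg ends {#e1, e2, e3#} u)"
    unfolding C_def using mg E even by (intro even_sum_mdeg_component) simp_all
  ultimately show ?thesis unfolding C_def by simp
qed

lemma three_spokes_reach_centre:
  assumes mg: "multigraph V E ends"
    and E: "set_mset (add_mset e1 (add_mset e2 (add_mset e3 T))) \<subseteq> E"
    and even: "\<And>u. even (mdeg ends (add_mset e1 (add_mset e2 (add_mset e3 T))) u)"
    and h1: "ends e1 = {v, x1}" and h2: "ends e2 = {v, x2}" and h3: "ends e3 = {v, x3}"
  shows "(x1, v) \<in> (madj ends T)\<^sup>* \<or> (x2, v) \<in> (madj ends T)\<^sup>* \<or> (x3, v) \<in> (madj ends T)\<^sup>*"
proof (rule ccontr)
  define r where "r x y \<longleftrightarrow> (x, y) \<in> (madj ends T)\<^sup>*" for x y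
  assume "\<not> ?thesis"
  then have cut: "\<not> r x1 v" "\<not> r x2 v" "\<not> r x3 v" unfolding r_def by simp_all
  have parity: "even (of_bool (r y x1) + of_bool (r y x2) + of_bool (r y x3) :: nat)"
    if "\<not> r y v" for y
    using even_ends_in_component[OF mg E even h1 h2 h3] that unfolding r_def .
  have refl: "r x x" for x unfolding r_def by simp
  have sym: "r x y \<Longrightarrow> r y x" for x y unfolding r_def by (rule rtrancl_madj_sym)
  have "even (1 + of_bool (r x1 x2) + of_bool (r x1 x3) :: nat)"
    "even (of_bool (r x2 x1) + 1 + of_bool (r x2 x3) :: nat)"
    "even (of_bool (r x3 x1) + of_bool (r x3 x2) + 1 :: nat)"
    using parity[OF cut(1)] parity[OF cut(2)] parity[OF cut(3)] refl[of x1] refl[of x2] refl[of x3]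
    by simp_all
  then show False
    using sym[of x1 x2] sym[of x2 x1] sym[of x1 x3] sym[of x3 x1] sym[of x2 x3] sym[of x3 x2]
    by (cases "r x1 x2"; cases "r x1 x3"; cases "r x2 x3") auto
qed

lemma rtrancl_madj_exchange:
  assumes "(b, u) \<in> (madj ends (A + T))\<^sup>*"
    and "\<And>k. k \<in> mverts ends A \<Longrightarrow> (b, k) \<in> (madj ends (B + T))\<^sup>*"
  shows "(b, u) \<in> (madj ends (B + T))\<^sup>*"
  using assms(1)
proof (induction rule: rtrancl_induct)
  case base
  show ?case by simp
next
  case (step p q)
  show ?case
  proof (cases "(p, q) \<in> madj ends T")
    case True
    then have "(p, q) \<in> madj ends (B + T)" by (simp add: madj_union)
    with step.IH show ?thesis by (rule rtrancl_into_rtrancl)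
  next
    case False
    with step.hyps(2) have "q \<in> mverts ends A" by (auto simp: madj_union madj_def mverts_def)
    then show ?thesis by (rule assms(2))
  qed
qed

lemma eulerian_exchange:
  assumes eul: "eulerian ends (A + T)" and T: "mverts ends T \<noteq> {}"
    and verts: "mverts ends B \<subseteq> mverts ends A \<union> mverts ends T"
    and parity: "\<And>u. even (mdeg ends A u + mdeg ends B u)"
    and b: "b \<in> mverts ends A"
    and bridge: "\<And>k. k \<in> mverts ends A \<Longrightarrow> (b, k) \<in> (madj ends (B + T))\<^sup>*"
  shows "eulerian ends (B + T)"
proof -
  have reach: "(b, u) \<in> (madj ends (B + T))\<^sup>*" if "u \<in> mverts ends (B + T)" for u
  proof (rule rtrancl_madj_exchange[OF _ bridge])
    have "u \<in> mverts ends (A + T)" using that verts by (auto simp: mverts_union)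
    then show "(b, u) \<in> (madj ends (A + T))\<^sup>*"
      using eul b unfolding eulerian_def mconnected_def by (auto simp: mverts_union)
  qed
  have "mconnected ends (B + T)"
    unfolding mconnected_def
  proof (intro conjI ballI)
    show "mverts ends (B + T) \<noteq> {}" using T by (simp add: mverts_union)
    fix u w assume u: "u \<in> mverts ends (B + T)" and w: "w \<in> mverts ends (B + T)"
    have "(u, b) \<in> (madj ends (B + T))\<^sup>*" using reach[OF u] by (rule rtrancl_madj_sym)
    then show "(u, w) \<in> (madj ends (B + T))\<^sup>*" using reach[OF w] by (rule rtrancl_trans)
  qed
  moreover have "even (mdeg ends (B + T) u)" for u
    using eulerian_even_mdeg[OF eul, of u] parity[of u] unfolding mdeg_union by presburger
  ultimately show ?thesis unfolding eulerian_def by blast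
qed

lemma mweight_union: "mweight w (A + B) = mweight w A + mweight w B"
  unfolding mweight_def by simp

lemma shortcut_edges:
  assumes met: "metric_instance V E ends R \<omega>" and E: "e1 \<in> E" "e2 \<in> E"
    and h1: "ends e1 = {v, x1}" and h2: "ends e2 = {v, x2}"
  obtains B where "set_mset B \<subseteq> E" "size B < 2" "mweight \<omega> B \<le> \<omega> e1 + \<omega> e2"
    "\<And>u. even (mdeg ends {#e1, e2#} u + mdeg ends B u)"
    "mverts ends B \<subseteq> {x1, x2}" "(x1, x2) \<in> (madj ends B)\<^sup>*"
proof (cases "x1 = x2")
  case True
  show ?thesis
  proof (rule that[of "{#}"])
    show "even (mdeg ends {#e1, e2#} u + mdeg ends {#} u)" for u
      using True by (simp add: mdeg_add_mset[of ends e1 "{#e2#}"] mdeg_single_pair[of ends e1 v x1, OF h1]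
          mdeg_single_pair[of ends e2 v x2, OF h2] mdeg_empty)
  qed (simp_all add: True mweight_def mverts_def)
next
  case False
  have mg: "multigraph V E ends" and
    edge: "\<forall>u\<in>V. \<forall>v\<in>V. u \<noteq> v \<longrightarrow> (\<exists>e\<in>E. ends e = {u, v})" and
    tri: "\<forall>u\<in>V. \<forall>v\<in>V. \<forall>x\<in>V. \<forall>e1\<in>E. \<forall>e2\<in>E. \<forall>e3\<in>E.
      ends e1 = {u, x} \<longrightarrow> ends e2 = {u, v} \<longrightarrow> ends e3 = {v, x} \<longrightarrow> \<omega> e1 \<le> \<omega> e2 + \<omega> e3"
    using met unfolding metric_instance_def rpp_instance_def by blast+
  have V: "v \<in> V" "x1 \<in> V" "x2 \<in> V" using mg E h1 h2 unfolding multigraph_def by auto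
  obtain f where f: "f \<in> E" "ends f = {x1, x2}"
    using edge[rule_format, OF V(2,3) False] by blast
  have "ends e1 = {x1, v}" using h1 by auto
  then have "\<omega> f \<le> \<omega> e1 + \<omega> e2"
    using tri[rule_format, OF V(2,1,3) f(1) E f(2) _ h2] by blast
  then show ?thesis
  proof (intro that[of "{#f#}"])
    show "even (mdeg ends {#e1, e2#} u + mdeg ends {#f#} u)" for u
      by (simp add: mdeg_add_mset[of ends e1 "{#e2#}"] mdeg_single_pair[of ends e1 v x1, OF h1]
          mdeg_single_pair[of ends e2 v x2, OF h2] mdeg_single_pair[of ends f x1 x2, OF f(2)])
    show "(x1, x2) \<in> (madj ends {#f#})\<^sup>*" using f(2) unfolding madj_def by auto
  qed (use f in \<open>simp_all add: mweight_def mverts_def\<close>)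
qed

lemma edge_minimizing_not_reachable:
  assumes met: "metric_instance V E ends R \<omega>" and min: "edge_minimizing E ends R \<omega> S"
    and S: "S = add_mset e1 (add_mset e2 S1)"
    and h1: "ends e1 = {v, x1}" and h2: "ends e2 = {v, x2}"
  shows "(x1, v) \<notin> (madj ends (R + S1))\<^sup>*"
proof
  assume reach: "(x1, v) \<in> (madj ends (R + S1))\<^sup>*"
  have mg: "multigraph V E ends" and R: "R \<noteq> {#}" "set_mset R \<subseteq> E"
    using met unfolding metric_instance_def rpp_instance_def by blast+
  have SE: "set_mset S \<subseteq> E" and eul: "eulerian ends (R + S)"
    using min unfolding edge_minimizing_def eulerian_extension_def by blast+
  obtain B where B: "set_mset B \<subseteq> E" "size B < 2" "mweight \<omega> B \<le> \<omega> e1 + \<omega> e2"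
    "\<And>u. even (mdeg ends {#e1, e2#} u + mdeg ends B u)"
    "mverts ends B \<subseteq> {x1, x2}" "(x1, x2) \<in> (madj ends B)\<^sup>*"
  proof -
    have "e1 \<in> E" "e2 \<in> E" using SE S by auto
    then show ?thesis using that shortcut_edges[OF met _ _ h1 h2] by blast
  qed
  have A: "mverts ends {#e1, e2#} = {v, x1, x2}" using h1 h2 unfolding mverts_def by auto
  have "eulerian ends (B + (R + S1))"
  proof (rule eulerian_exchange[where A = "{#e1, e2#}" and b = v])
    show "eulerian ends ({#e1, e2#} + (R + S1))" using eul S by (simp add: add.commute)
    obtain r where "r \<in># R" using R(1) by blast
    moreover have "ends r \<noteq> {}" using mg R(2) \<open>r \<in># R\<close> unfolding multigraph_def by auto
    ultimately show "mverts ends (R + S1) \<noteq> {}" unfolding mverts_def by auto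
    have "(v, x1) \<in> (madj ends (B + (R + S1)))\<^sup>*"
      using rtrancl_madj_sym[OF reach] rtrancl_madj_mono[of "R + S1" "B + (R + S1)"] by auto
    moreover have "(x1, x2) \<in> (madj ends (B + (R + S1)))\<^sup>*"
      using B(6) rtrancl_madj_mono[of B "B + (R + S1)"] by auto
    ultimately show "(v, k) \<in> (madj ends (B + (R + S1)))\<^sup>*" if "k \<in> mverts ends {#e1, e2#}" for k
      using that A by auto
    show "mverts ends B \<subseteq> mverts ends {#e1, e2#} \<union> mverts ends (R + S1)"
      using A B(5) by blast
    show "v \<in> mverts ends {#e1, e2#}" using A by blast
  qed (rule B(4))
  then have "eulerian_extension E ends R (B + S1)"
    using B(1) SE S unfolding eulerian_extension_def by (simp add: add.left_commute)
  moreover have "size (B + S1) < size S" using B(2) S by simp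
  moreover have "mweight \<omega> (B + S1) \<le> mweight \<omega> S"
    using B(3) S by (simp add: mweight_union mweight_def)
  ultimately show False using min unfolding edge_minimizing_def by blast
qed

lemma three_elems_if_size_filter_mset:
  assumes "3 \<le> size (filter_mset P M)"
  obtains a b c N where "M = add_mset a (add_mset b (add_mset c N))" "P a" "P b" "P c"
proof -
  obtain a F1 where "filter_mset P M = add_mset a F1" "2 \<le> size F1"
    using assms by (cases "filter_mset P M") auto
  moreover obtain b F2 where "F1 = add_mset b F2" "1 \<le> size F2"
    using \<open>2 \<le> size F1\<close> by (cases F1) auto
  moreover obtain c F where "F2 = add_mset c F"
    using \<open>1 \<le> size F2\<close> by (cases F2) auto
  ultimately have F: "filter_mset P M = add_mset a (add_mset b (add_mset c F))" by simp
  then have "a \<in># filter_mset P M" "b \<in># filter_mset P M" "c \<in># filter_mset P M" by simp_all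
  then have "P a" "P b" "P c" by simp_all
  moreover have "M = add_mset a (add_mset b (add_mset c (F + filter_mset (\<lambda>e. \<not> P e) M)))"
    using multiset_partition[of M P] F by simp
  ultimately show ?thesis by (rule that[rotated])
qed

theorem mainTheorem7:
  fixes V :: "'v set" and E :: "'e set" and ends :: "'e \<Rightarrow> 'v set"
    and R S :: "'e multiset" and \<omega> :: "'e \<Rightarrow> nat"
  assumes "metric_instance V E ends R \<omega>"
    and "edge_minimizing E ends R \<omega> S"
    and "v \<in> V"
  shows "size (filter_mset (\<lambda>e. v \<in> ends e) S) \<le> 2"
proof (rule ccontr)
  assume "\<not> size (filter_mset (\<lambda>e. v \<in> ends e) S) \<le> 2"
  then have "3 \<le> size (filter_mset (\<lambda>e. v \<in> ends e) S)" by simp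
  then obtain e1 e2 e3 S0 where S: "S = add_mset e1 (add_mset e2 (add_mset e3 S0))"
    and inc: "v \<in> ends e1" "v \<in> ends e2" "v \<in> ends e3"
    by (rule three_elems_if_size_filter_mset)
  have mg: "multigraph V E ends" and RE: "set_mset R \<subseteq> E"
    using assms(1) unfolding metric_instance_def rpp_instance_def by blast+
  have SE: "set_mset S \<subseteq> E" and eul: "eulerian ends (R + S)"
    using assms(2) unfolding edge_minimizing_def eulerian_extension_def by blast+
  have E123: "e1 \<in> E" "e2 \<in> E" "e3 \<in> E" using SE S by auto
  obtain x1 where h1: "ends e1 = {v, x1}" by (rule multigraph_incident_ends[OF mg E123(1) inc(1)])
  obtain x2 where h2: "ends e2 = {v, x2}" by (rule multigraph_incident_ends[OF mg E123(2) inc(2)])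
  obtain x3 where h3: "ends e3 = {v, x3}" by (rule multigraph_incident_ends[OF mg E123(3) inc(3)])
  have RS: "R + S = add_mset e1 (add_mset e2 (add_mset e3 (R + S0)))" by (simp add: S)
  have cut: "(x, v) \<notin> (madj ends (R + S0))\<^sup>*"
    if "S = add_mset e (add_mset e' (add_mset e'' S0))" "ends e = {v, x}" "ends e' = {v, x'}"
    for e e' e'' x x'
    using edge_minimizing_not_reachable[OF assms(1,2) _ that(2,3), of "add_mset e'' S0"] that(1)
      rtrancl_madj_mono[of "R + S0" "R + add_mset e'' S0"] by auto
  have "(x1, v) \<in> (madj ends (R + S0))\<^sup>* \<or> (x2, v) \<in> (madj ends (R + S0))\<^sup>*
      \<or> (x3, v) \<in> (madj ends (R + S0))\<^sup>*"
  proof (rule three_spokes_reach_centre[OF mg _ _ h1 h2 h3])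
    show "set_mset (add_mset e1 (add_mset e2 (add_mset e3 (R + S0)))) \<subseteq> E"
      using RE SE unfolding RS[symmetric] by simp
    show "even (mdeg ends (add_mset e1 (add_mset e2 (add_mset e3 (R + S0)))) u)" for u
      using eulerian_even_mdeg[OF eul] unfolding RS .
  qed
  moreover have "S = add_mset e2 (add_mset e1 (add_mset e3 S0))"
    and "S = add_mset e3 (add_mset e1 (add_mset e2 S0))" using S by (simp_all add: add_mset_commute)
  ultimately show False using cut[OF S h1 h2] cut[OF _ h2 h1] cut[OF _ h3 h1] by blast
qed

end
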